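(* Let $G'$ be an antipodal partial cube of rank $r$ and let $G$ be a halfspace of $G'$ (so $G$ is an affine partial cube). Then $G$ has rank at most $r-1$.
   Context: Hypercube $Q_n$: vertex set $\{+,-\}^n$, adjacency = differing in one coordinate. A partial cube is an isometric subgraph $G'$ of $Q_n$ with $n$ minimal; its edges split into $\Theta$-classes $E_f$ (edges flipping coordinate $f$), and the halfspaces $E_f^{+},E_f^{-}$ are the subgraphs induced by the vertices whose coordinate $f$ is $+$, resp. $-$. $G'$ is antipodal if for each vertex the vertex with all coordinates flipped also belongs to $G'$. An affine partial cube is a halfspace of an antipodal partial cube. The contraction $\pi_f$ contracts all edges of $E_f$; the rank of a partial cube is the largest $r$ such that $Q_r$ can be obtained from it by a sequence of contractions. *)

theory Defs
  imports Main
begin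

text \<open>Vertices of the hypercube Q_n are sign vectors, encoded as functions
  nat \<Rightarrow> bool (True = +, False = -) that are False outside the coordinates 0..<n.\<close>

definition cube :: "nat \<Rightarrow> (nat \<Rightarrow> bool) set" where
  "cube n = {x. \<forall>i\<ge>n. \<not> x i}"

definition hamming :: "nat \<Rightarrow> (nat \<Rightarrow> bool) \<Rightarrow> (nat \<Rightarrow> bool) \<Rightarrow> nat" where
  "hamming n x y = card {i. i < n \<and> x i \<noteq> y i}"

definition cube_adj :: "nat \<Rightarrow> (nat \<Rightarrow> bool) \<Rightarrow> (nat \<Rightarrow> bool) \<Rightarrow> bool" where
  "cube_adj n x y \<longleftrightarrow> hamming n x y = 1"

inductive walk :: "('a \<Rightarrow> 'a \<Rightarrow> bool) \<Rightarrow> 'a set \<Rightarrow> 'a \<Rightarrow> 'a \<Rightarrow> nat \<Rightarrow> bool"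
  for adj V where
  walk_refl: "x \<in> V \<Longrightarrow> walk adj V x x 0"
| walk_step: "x \<in> V \<Longrightarrow> adj x y \<Longrightarrow> walk adj V y z k \<Longrightarrow> walk adj V x z (Suc k)"

definition gdist_is :: "('a \<Rightarrow> 'a \<Rightarrow> bool) \<Rightarrow> 'a set \<Rightarrow> 'a \<Rightarrow> 'a \<Rightarrow> nat \<Rightarrow> bool" where
  "gdist_is adj V x y d \<longleftrightarrow> walk adj V x y d \<and> (\<forall>k. walk adj V x y k \<longrightarrow> d \<le> k)"

definition isometric_embedding ::
  "('a \<Rightarrow> 'a \<Rightarrow> bool) \<Rightarrow> 'a set \<Rightarrow> nat \<Rightarrow> ('a \<Rightarrow> nat \<Rightarrow> bool) \<Rightarrow> bool" where
  "isometric_embedding adj V m \<phi> \<longleftrightarrow>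
     (\<forall>x\<in>V. \<phi> x \<in> cube m) \<and>
     (\<forall>x\<in>V. \<forall>y\<in>V. gdist_is adj V x y (hamming m (\<phi> x) (\<phi> y)))"

definition isometric_subgraph :: "nat \<Rightarrow> (nat \<Rightarrow> bool) set \<Rightarrow> bool" where
  "isometric_subgraph n V \<longleftrightarrow> V \<subseteq> cube n \<and> isometric_embedding (cube_adj n) V n id"

definition partial_cube :: "nat \<Rightarrow> (nat \<Rightarrow> bool) set \<Rightarrow> bool" where
  "partial_cube n V \<longleftrightarrow> isometric_subgraph n V \<and>
     (\<forall>m \<phi>. isometric_embedding (cube_adj n) V m \<phi> \<longrightarrow> n \<le> m)"

definition antipode :: "nat \<Rightarrow> (nat \<Rightarrow> bool) \<Rightarrow> (nat \<Rightarrow> bool)" where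
  "antipode n x = (\<lambda>i. if i < n then \<not> x i else False)"

definition antipodal :: "nat \<Rightarrow> (nat \<Rightarrow> bool) set \<Rightarrow> bool" where
  "antipodal n V \<longleftrightarrow> (\<forall>x\<in>V. antipode n x \<in> V)"

definition halfspace :: "(nat \<Rightarrow> bool) set \<Rightarrow> nat \<Rightarrow> bool \<Rightarrow> (nat \<Rightarrow> bool) set" where
  "halfspace V f s = {x \<in> V. x f = s}"

text \<open>Contraction \<pi>_f: contracting the \<Theta>-class E_f amounts to deleting
  coordinate f (we set it to the constant False, keeping the indexing).\<close>
definition contract :: "nat \<Rightarrow> (nat \<Rightarrow> bool) set \<Rightarrow> (nat \<Rightarrow> bool) set" where
  "contract f V = (\<lambda>x. x(f := False)) ` V"

definition contract_seq :: "nat list \<Rightarrow> (nat \<Rightarrow> bool) set \<Rightarrow> (nat \<Rightarrow> bool) set" where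
  "contract_seq fs V = fold contract fs V"

definition iso_to_cube :: "nat \<Rightarrow> (nat \<Rightarrow> bool) set \<Rightarrow> nat \<Rightarrow> bool" where
  "iso_to_cube n W r \<longleftrightarrow> (\<exists>\<phi>. bij_betw \<phi> W (cube r) \<and>
      (\<forall>x\<in>W. \<forall>y\<in>W. cube_adj n x y \<longleftrightarrow> cube_adj r (\<phi> x) (\<phi> y)))"

definition contracts_to_cube :: "nat \<Rightarrow> (nat \<Rightarrow> bool) set \<Rightarrow> nat \<Rightarrow> bool" where
  "contracts_to_cube n V r \<longleftrightarrow>
     (\<exists>fs. (\<forall>f\<in>set fs. f < n) \<and> iso_to_cube n (contract_seq fs V) r)"

definition has_rank :: "nat \<Rightarrow> (nat \<Rightarrow> bool) set \<Rightarrow> nat \<Rightarrow> bool" where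
  "has_rank n V r \<longleftrightarrow> contracts_to_cube n V r \<and> (\<forall>r'. contracts_to_cube n V r' \<longrightarrow> r' \<le> r)"

end

(*
  Contractions only delete coordinates, so Q_k is a contraction of a vertex set V of Q_n
  exactly when V shatters some k coordinates, i.e. realises all 2^k sign patterns on them.
  For the nontrivial direction, the inverse of an isomorphism from Q_k onto a contraction is
  an injective homomorphism Q_k -> Q_n; closing squares one at a time shows that it maps Q_k
  onto a subcube, whose k directions are shattered.

  If the halfspace E_f^s shatters C, then f is not in C because f is constant on E_f^s, and
  the antipodal V shatters C together with f: patterns with sign s at f are realised in E_f^s,
  those with sign -s by antipodes of its vertices.
*)

theory Submission
  imports Defs
begin

definition flip_at :: "nat \<Rightarrow> (nat \<Rightarrow> bool) \<Rightarrow> nat \<Rightarrow> bool" where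
  "flip_at p x = x(p := \<not> x p)"

definition flip_set :: "nat set \<Rightarrow> (nat \<Rightarrow> bool) \<Rightarrow> nat \<Rightarrow> bool" where
  "flip_set S x = (\<lambda>i. x i \<noteq> (i \<in> S))"

definition char_vec :: "nat set \<Rightarrow> nat \<Rightarrow> bool" where
  "char_vec J = (\<lambda>i. i \<in> J)"

definition zero_on :: "nat set \<Rightarrow> (nat \<Rightarrow> bool) \<Rightarrow> nat \<Rightarrow> bool" where
  "zero_on S x = (\<lambda>i. i \<notin> S \<and> x i)"

definition supported_on :: "nat set \<Rightarrow> (nat \<Rightarrow> bool) set" where
  "supported_on C = {y. \<forall>i. i \<notin> C \<longrightarrow> \<not> y i}"

definition reindex :: "(nat \<Rightarrow> nat) \<Rightarrow> nat \<Rightarrow> (nat \<Rightarrow> bool) \<Rightarrow> nat \<Rightarrow> bool" where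
  "reindex e m y = (\<lambda>j. j < m \<and> y (e j))"

definition shatters :: "(nat \<Rightarrow> bool) set \<Rightarrow> nat set \<Rightarrow> bool" where
  "shatters V C \<longleftrightarrow> (\<forall>g. \<exists>x\<in>V. \<forall>i\<in>C. x i = g i)"

lemma cube_adj_iff_flip_at:
  assumes "x \<in> cube n" "y \<in> cube n"
  shows "cube_adj n x y \<longleftrightarrow> (\<exists>p<n. y = flip_at p x)"
proof
  assume "cube_adj n x y"
  then obtain p where p: "{i. i < n \<and> x i \<noteq> y i} = {p}"
    by (auto simp: cube_adj_def hamming_def card_1_singleton_iff)
  have "y = flip_at p x"
  proof
    fix i show "y i = flip_at p x i"
      using p assms by (cases "i < n") (auto simp: flip_at_def cube_def)
  qed
  with p show "\<exists>p<n. y = flip_at p x" by blast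
next
  assume "\<exists>p<n. y = flip_at p x"
  then obtain p where "p < n" "y = flip_at p x" by blast
  then have "{i. i < n \<and> x i \<noteq> y i} = {p}" by (auto simp: flip_at_def)
  then show "cube_adj n x y" by (simp add: cube_adj_def hamming_def)
qed

lemma flip_at_square:
  assumes "flip_at p' (flip_at p a) = flip_at q' (flip_at q a)" "p \<noteq> q" "p' \<noteq> p"
  shows "p' = q"
  using fun_cong[OF assms(1), of q] fun_cong[OF assms(1), of p] assms(2,3)
  by (auto simp: flip_at_def split: if_splits)

lemma flip_at_flip_set: "i \<notin> S \<Longrightarrow> flip_at i (flip_set S x) = flip_set (insert i S) x"
  by (auto simp: flip_at_def flip_set_def fun_eq_iff)

lemma shatters_mono: "shatters V C \<Longrightarrow> V \<subseteq> W \<Longrightarrow> shatters W C"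
  unfolding shatters_def by blast

lemma shatters_flip_sets: "shatters {flip_set S w | S. S \<subseteq> C} C"
  unfolding shatters_def
proof
  fix g
  have "\<forall>i\<in>C. flip_set {i \<in> C. g i \<noteq> w i} w i = g i" by (auto simp: flip_set_def)
  then show "\<exists>x\<in>{flip_set S w | S. S \<subseteq> C}. \<forall>i\<in>C. x i = g i" by blast
qed

lemma char_vec_in_cube: "J \<subseteq> {..<k} \<Longrightarrow> char_vec J \<in> cube k"
  by (auto simp: char_vec_def cube_def)

lemma char_vec_inject [simp]: "char_vec J = char_vec J' \<longleftrightarrow> J = J'"
  by (auto simp: char_vec_def fun_eq_iff)

lemma cube_adj_char_vec_insert:
  assumes "j < k" "j \<notin> J"
  shows "cube_adj k (char_vec J) (char_vec (insert j J))"
proof -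
  have "{i. i < k \<and> char_vec J i \<noteq> char_vec (insert j J) i} = {j}"
    using assms by (auto simp: char_vec_def)
  then show ?thesis by (simp add: cube_adj_def hamming_def)
qed

locale inj_cube_hom =
  fixes k n :: nat and \<psi> :: "(nat \<Rightarrow> bool) \<Rightarrow> nat \<Rightarrow> bool"
  assumes into: "\<psi> ` cube k \<subseteq> cube n"
    and inj: "inj_on \<psi> (cube k)"
    and hom: "\<And>v v'. v \<in> cube k \<Longrightarrow> v' \<in> cube k \<Longrightarrow> cube_adj k v v' \<Longrightarrow>
      cube_adj n (\<psi> v) (\<psi> v')"
begin

lemma image_char_vec_insert_flip:
  assumes "J \<subseteq> {..<k}" "j < k" "j \<notin> J"
  shows "\<exists>p<n. \<psi> (char_vec (insert j J)) = flip_at p (\<psi> (char_vec J))"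
proof -
  have "char_vec J \<in> cube k" "char_vec (insert j J) \<in> cube k"
    using assms by (auto intro: char_vec_in_cube)
  moreover from this have "cube_adj n (\<psi> (char_vec J)) (\<psi> (char_vec (insert j J)))"
    using assms by (intro hom cube_adj_char_vec_insert)
  ultimately show ?thesis using cube_adj_iff_flip_at into by blast
qed

definition direction :: "nat \<Rightarrow> nat" where
  "direction j = (SOME p. p < n \<and> \<psi> (char_vec {j}) = flip_at p (\<psi> (char_vec {})))"

lemma direction:
  assumes "j < k"
  shows "direction j < n" "\<psi> (char_vec {j}) = flip_at (direction j) (\<psi> (char_vec {}))"
  using someI_ex[OF image_char_vec_insert_flip[of "{}" j]] assms
  by (auto simp: direction_def)

lemma inj_on_direction: "inj_on direction {..<k}"
proof (rule inj_onI)
  fix i j assume "i \<in> {..<k}" "j \<in> {..<k}" "direction i = direction j"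
  then have "\<psi> (char_vec {i}) = \<psi> (char_vec {j})" using direction(2) by auto
  moreover have "char_vec {i} \<in> cube k" "char_vec {j} \<in> cube k"
    using \<open>i \<in> {..<k}\<close> \<open>j \<in> {..<k}\<close> by (auto intro: char_vec_in_cube)
  ultimately show "i = j" using inj by (auto dest: inj_onD)
qed

text \<open>The images of the square J, insert i J, insert j J, insert j (insert i J)
  form a square in Q_n, which flip_at_square closes.\<close>
lemma image_char_vec_insert:
  assumes "finite J" "J \<subseteq> {..<k}" "j < k" "j \<notin> J"
  shows "\<psi> (char_vec (insert j J)) = flip_at (direction j) (\<psi> (char_vec J))"
  using assms
proof (induction J arbitrary: j rule: finite_induct)
  case empty
  then show ?case using direction by simp
next
  case (insert i J)
  define a where "a = \<psi> (char_vec J)"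
  define u where "u = \<psi> (char_vec (insert j (insert i J)))"
  have i: "i < k" "i \<notin> insert j J" and J: "J \<subseteq> {..<k}"
    using insert.hyps insert.prems by auto
  obtain p' where p': "u = flip_at p' (flip_at (direction i) a)"
    using image_char_vec_insert_flip[of "insert i J" j] insert.IH[of i] insert.prems i J
    unfolding u_def a_def by auto
  obtain q' where q': "u = flip_at q' (flip_at (direction j) a)"
    using image_char_vec_insert_flip[of "insert j J" i] insert.IH[of j] insert.prems i J
    unfolding u_def a_def by (auto simp: insert_commute)
  have "direction i \<noteq> direction j"
    using inj_on_direction i insert.prems by (auto dest: inj_onD)
  moreover have "p' \<noteq> direction i"
  proof
    assume "p' = direction i"
    then have "\<psi> (char_vec (insert j (insert i J))) = \<psi> (char_vec J)"
      using p' by (simp add: u_def a_def flip_at_def)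
    then have "insert j (insert i J) = J"
      using inj insert.prems J i by (auto dest!: inj_onD intro: char_vec_in_cube)
    then show False using insert.prems by blast
  qed
  ultimately have "p' = direction j" using flip_at_square p' q' by metis
  then show ?case using p' insert.IH[of i] i J by (simp add: u_def a_def)
qed

lemma image_char_vec: "J \<subseteq> {..<k} \<Longrightarrow> \<psi> (char_vec J) = flip_set (direction ` J) (\<psi> (char_vec {}))"
proof (induction J rule: infinite_finite_induct)
  case (infinite J)
  then show ?case using finite_subset by blast
next
  case empty
  then show ?case by (simp add: flip_set_def)
next
  case (insert j J)
  then have J: "J \<subseteq> {..<k}" and j: "j < k" by auto
  have "direction j \<notin> direction ` J"
    using inj_on_direction insert.hyps(2) J j by (auto simp: inj_on_def)
  have "\<psi> (char_vec (insert j J)) = flip_at (direction j) (\<psi> (char_vec J))"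
    using image_char_vec_insert[OF insert.hyps(1) J j insert.hyps(2)] .
  also have "\<dots> = flip_at (direction j) (flip_set (direction ` J) (\<psi> (char_vec {})))"
    using insert.IH[OF J] by (rule arg_cong)
  also have "\<dots> = flip_set (direction ` insert j J) (\<psi> (char_vec {}))"
    using \<open>direction j \<notin> direction ` J\<close> by (simp add: flip_at_flip_set)
  finally show ?case .
qed

lemma shatters_image: "shatters (\<psi> ` cube k) (direction ` {..<k})"
proof -
  have "{flip_set S (\<psi> (char_vec {})) | S. S \<subseteq> direction ` {..<k}} \<subseteq> \<psi> ` cube k"
  proof
    fix x assume "x \<in> {flip_set S (\<psi> (char_vec {})) | S. S \<subseteq> direction ` {..<k}}"
    then obtain J where J: "J \<subseteq> {..<k}" and "x = flip_set (direction ` J) (\<psi> (char_vec {}))"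
      by (auto simp: subset_image_iff)
    then have "x = \<psi> (char_vec J)" using image_char_vec[OF J] by simp
    then show "x \<in> \<psi> ` cube k" using char_vec_in_cube[OF J] by blast
  qed
  with shatters_flip_sets show ?thesis by (rule shatters_mono)
qed

end

lemma iso_to_cube_shatters:
  assumes "W \<subseteq> cube n" "iso_to_cube n W k"
  obtains C where "C \<subseteq> {..<n}" "card C = k" "shatters W C"
proof -
  obtain \<phi> where bij: "bij_betw \<phi> W (cube k)"
    and adj: "\<forall>x\<in>W. \<forall>y\<in>W. cube_adj n x y \<longleftrightarrow> cube_adj k (\<phi> x) (\<phi> y)"
    using assms(2) unfolding iso_to_cube_def by blast
  define \<psi> where "\<psi> = inv_into W \<phi>"
  have \<psi>_W: "\<psi> ` cube k \<subseteq> W"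
    using bij by (auto simp: \<psi>_def bij_betw_def inv_into_into)
  have \<phi>_\<psi>: "\<phi> (\<psi> v) = v" if "v \<in> cube k" for v
    using bij that by (simp add: \<psi>_def bij_betw_def f_inv_into_f)
  interpret inj_cube_hom k n \<psi>
  proof
    show "\<psi> ` cube k \<subseteq> cube n" using \<psi>_W assms(1) by blast
    show "inj_on \<psi> (cube k)"
      using bij by (simp add: \<psi>_def bij_betw_def inj_on_inv_into)
    show "cube_adj n (\<psi> v) (\<psi> v')"
      if "v \<in> cube k" "v' \<in> cube k" "cube_adj k v v'" for v v'
    proof -
      have "\<psi> v \<in> W" "\<psi> v' \<in> W" using that \<psi>_W by auto
      then show ?thesis using that adj \<phi>_\<psi> by simp
    qed
  qed
  show ?thesis
  proof
    show "direction ` {..<k} \<subseteq> {..<n}" using direction(1) by auto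
    show "card (direction ` {..<k}) = k" using inj_on_direction by (simp add: card_image)
    show "shatters W (direction ` {..<k})"
      using shatters_image \<psi>_W by (rule shatters_mono)
  qed
qed

lemma contract_seq_eq_zero_on_image: "contract_seq fs V = zero_on (set fs) ` V"
proof (induction fs arbitrary: V)
  case Nil
  then show ?case by (simp add: contract_seq_def zero_on_def)
next
  case (Cons f fs)
  have "contract_seq (f # fs) V = zero_on (set fs) ` contract f V"
    using Cons.IH by (simp add: contract_seq_def)
  also have "\<dots> = zero_on (set (f # fs)) ` V"
    unfolding contract_def image_image by (rule image_cong) (auto simp: zero_on_def)
  finally show ?case .
qed

lemma shatters_zero_on_image:
  assumes "shatters (zero_on S ` V) C"
  shows "shatters V C"
  unfolding shatters_def
proof
  fix g
  obtain x where "x \<in> V" "\<forall>i\<in>C. zero_on S x i"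
    using assms[unfolded shatters_def, THEN spec, of "\<lambda>_. True"] by blast
  then have "C \<inter> S = {}" by (auto simp: zero_on_def)
  moreover obtain x where "x \<in> V" "\<forall>i\<in>C. zero_on S x i = g i"
    using assms unfolding shatters_def by blast
  ultimately show "\<exists>x\<in>V. \<forall>i\<in>C. x i = g i" by (auto simp: zero_on_def)
qed

lemma bij_betw_reindex_supported_on:
  assumes e: "bij_betw e {..<m} C"
  shows "bij_betw (reindex e m) (supported_on C) (cube m)"
proof -
  have e_inv: "e (inv_into {..<m} e i) = i" "inv_into {..<m} e i < m" if "i \<in> C" for i
    using e that by (auto simp: bij_betw_def f_inv_into_f inv_into_into)
  have e_C: "e j \<in> C" "inv_into {..<m} e (e j) = j" if "j < m" for j
    using e that by (auto simp: bij_betw_def)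
  have "inj_on (reindex e m) (supported_on C)"
  proof (rule inj_onI)
    fix y y' assume y: "y \<in> supported_on C" "y' \<in> supported_on C"
      and eq: "reindex e m y = reindex e m y'"
    show "y = y'"
    proof
      fix i show "y i = y' i"
      proof (cases "i \<in> C")
        case True
        then show ?thesis
          using fun_cong[OF eq, of "inv_into {..<m} e i"] e_inv by (simp add: reindex_def)
      next
        case False
        then show ?thesis using y by (simp add: supported_on_def)
      qed
    qed
  qed
  moreover have "cube m \<subseteq> reindex e m ` supported_on C"
  proof
    fix v assume "v \<in> cube m"
    then have "v j \<Longrightarrow> j < m" for j by (auto simp: cube_def intro: leI)
    then have "reindex e m (\<lambda>i. i \<in> C \<and> v (inv_into {..<m} e i)) = v"
      using e_C by (auto simp: reindex_def fun_eq_iff)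
    moreover have "(\<lambda>i. i \<in> C \<and> v (inv_into {..<m} e i)) \<in> supported_on C"
      by (simp add: supported_on_def)
    ultimately show "v \<in> reindex e m ` supported_on C" by (metis image_eqI)
  qed
  moreover have "reindex e m ` supported_on C \<subseteq> cube m"
    by (auto simp: reindex_def cube_def)
  ultimately show ?thesis by (auto simp: bij_betw_def)
qed

lemma hamming_reindex:
  assumes e: "bij_betw e {..<m} C" and "C \<subseteq> {..<n}"
    and y: "y \<in> supported_on C" "y' \<in> supported_on C"
  shows "hamming m (reindex e m y) (reindex e m y') = hamming n y y'"
proof -
  let ?D = "{j. j < m \<and> reindex e m y j \<noteq> reindex e m y' j}"
  have "{i. i < n \<and> y i \<noteq> y' i} = e ` ?D"
  proof (intro set_eqI iffI)
    fix i assume i: "i \<in> {i. i < n \<and> y i \<noteq> y' i}"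
    then have "i \<in> C" using y by (auto simp: supported_on_def)
    then show "i \<in> e ` ?D"
      using i e by (intro image_eqI[of _ _ "inv_into {..<m} e i"])
        (auto simp: reindex_def bij_betw_def f_inv_into_f inv_into_into)
  next
    fix i assume "i \<in> e ` ?D"
    then show "i \<in> {i. i < n \<and> y i \<noteq> y' i}"
      using e assms(2) by (auto simp: reindex_def bij_betw_def)
  qed
  moreover have "inj_on e ?D"
    using e by (auto simp: bij_betw_def intro: inj_on_subset)
  ultimately show ?thesis unfolding hamming_def by (simp add: card_image)
qed

lemma iso_to_cube_supported_on:
  assumes "C \<subseteq> {..<n}"
  shows "iso_to_cube n (supported_on C) (card C)"
proof -
  have "finite C" using assms finite_subset by blast
  then obtain e where e: "bij_betw e {..<card C} C"
    using ex_bij_betw_nat_finite by (auto simp: lessThan_atLeast0)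
  show ?thesis
    unfolding iso_to_cube_def cube_adj_def
    using bij_betw_reindex_supported_on[OF e] hamming_reindex[OF e assms] by auto
qed

lemma zero_on_image_eq_supported_on:
  assumes "V \<subseteq> cube n" "shatters V C"
  shows "zero_on ({..<n} - C) ` V = supported_on C"
proof
  show "zero_on ({..<n} - C) ` V \<subseteq> supported_on C"
    using assms(1) by (auto simp: zero_on_def cube_def supported_on_def)
  show "supported_on C \<subseteq> zero_on ({..<n} - C) ` V"
  proof
    fix y assume y: "y \<in> supported_on C"
    obtain x where "x \<in> V" "\<forall>i\<in>C. x i = y i"
      using assms(2) unfolding shatters_def by blast
    moreover from this have "zero_on ({..<n} - C) x = y"
      using y assms(1) by (auto simp: zero_on_def cube_def supported_on_def fun_eq_iff)
    ultimately show "y \<in> zero_on ({..<n} - C) ` V" by blast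
  qed
qed

lemma contracts_to_cube_iff_shatters:
  assumes "V \<subseteq> cube n"
  shows "contracts_to_cube n V k \<longleftrightarrow> (\<exists>C\<subseteq>{..<n}. card C = k \<and> shatters V C)"
proof
  assume "contracts_to_cube n V k"
  then obtain fs where "iso_to_cube n (zero_on (set fs) ` V) k"
    unfolding contracts_to_cube_def contract_seq_eq_zero_on_image by blast
  moreover have "zero_on (set fs) ` V \<subseteq> cube n"
    using assms by (auto simp: zero_on_def cube_def)
  ultimately show "\<exists>C\<subseteq>{..<n}. card C = k \<and> shatters V C"
    by (metis iso_to_cube_shatters shatters_zero_on_image)
next
  assume "\<exists>C\<subseteq>{..<n}. card C = k \<and> shatters V C"
  then obtain C where C: "C \<subseteq> {..<n}" "card C = k" and sh: "shatters V C" by blast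
  define fs where "fs = filter (\<lambda>i. i \<notin> C) [0..<n]"
  have "set fs = {..<n} - C" by (auto simp: fs_def)
  then have "contract_seq fs V = supported_on C"
    using zero_on_image_eq_supported_on[OF assms sh] by (simp add: contract_seq_eq_zero_on_image)
  then show "contracts_to_cube n V k"
    unfolding contracts_to_cube_def
    using iso_to_cube_supported_on[OF C(1)] C(2) \<open>set fs = {..<n} - C\<close> by auto
qed

lemma shatters_halfspace_not_mem:
  assumes "shatters (halfspace V f s) C"
  shows "f \<notin> C"
proof
  assume "f \<in> C"
  obtain x where "x \<in> halfspace V f s" "\<forall>i\<in>C. x i = (\<not> s)"
    using assms[unfolded shatters_def, THEN spec, of "\<lambda>_. \<not> s"] by blast
  with \<open>f \<in> C\<close> show False by (auto simp: halfspace_def)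
qed

lemma antipodal_shatters_insert:
  assumes "antipodal n V" "f < n" "C \<subseteq> {..<n}" "shatters (halfspace V f s) C"
  shows "shatters V (insert f C)"
  unfolding shatters_def
proof
  fix g
  show "\<exists>x\<in>V. \<forall>i\<in>insert f C. x i = g i"
  proof (cases "g f = s")
    case True
    obtain h where "h \<in> halfspace V f s" "\<forall>i\<in>C. h i = g i"
      using assms(4)[unfolded shatters_def, THEN spec, of g] by blast
    with True show ?thesis by (auto simp: halfspace_def)
  next
    case False
    obtain h where "h \<in> halfspace V f s" "\<forall>i\<in>C. h i = (\<not> g i)"
      using assms(4)[unfolded shatters_def, THEN spec, of "\<lambda>i. \<not> g i"] by blast
    then have h: "h \<in> V" "h f = s" "\<forall>i\<in>C. h i = (\<not> g i)" by (auto simp: halfspace_def)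
    then have "\<forall>i\<in>insert f C. antipode n h i = g i"
      using False assms(2,3) by (auto simp: antipode_def)
    moreover have "antipode n h \<in> V" using assms(1) h(1) by (simp add: antipodal_def)
    ultimately show ?thesis by blast
  qed
qed

theorem mainTheorem17:
  fixes n r f :: nat and V :: "(nat \<Rightarrow> bool) set" and s :: bool
  assumes "partial_cube n V"
    and "antipodal n V"
    and "has_rank n V r"
    and "f < n"
  shows "\<forall>r'. contracts_to_cube n (halfspace V f s) r' \<longrightarrow> r' \<le> r - 1"
proof (intro allI impI)
  fix r' assume "contracts_to_cube n (halfspace V f s) r'"
  have V: "V \<subseteq> cube n"
    using assms(1) by (simp add: partial_cube_def isometric_subgraph_def)
  then have "halfspace V f s \<subseteq> cube n" by (auto simp: halfspace_def)
  with \<open>contracts_to_cube n (halfspace V f s) r'\<close>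
  obtain C where C: "C \<subseteq> {..<n}" "card C = r'" and sh: "shatters (halfspace V f s) C"
    by (auto simp: contracts_to_cube_iff_shatters)
  have "f \<notin> C" using sh by (rule shatters_halfspace_not_mem)
  moreover have "finite C" using C(1) finite_subset by blast
  ultimately have "card (insert f C) = Suc r'" using C(2) by simp
  moreover have "shatters V (insert f C)"
    using assms(2) assms(4) C(1) sh by (rule antipodal_shatters_insert)
  moreover have "insert f C \<subseteq> {..<n}" using C(1) assms(4) by simp
  ultimately have "contracts_to_cube n V (Suc r')"
    unfolding contracts_to_cube_iff_shatters[OF V] by blast
  then have "Suc r' \<le> r" using assms(3) by (simp add: has_rank_def)
  then show "r' \<le> r - 1" by simp
qed

end
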